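(* Let $0<q<1$, $Q=1/q$. For every $n\ge2$, \[ F_n=\sum_{k=2}^n\binom nk(-1)^k\left[\frac{k-1}{Q^{k-1}-1}-\frac{k}{Q^k-1}\right], \] where $F_n$ is the expected number of letters strictly to the left of the last left-to-right maximum (i.e. of the first occurrence of the maximal letter) in a random word of length $n$.
   Context: Words $a_1\dots a_n$ have independent letters with $\mathbb P\{a_i=k\}=pq^{k-1}$, $k\ge1$, $p=1-q$. An index $i$ is a left-to-right maximum if $a_i>a_j$ for all $j<i$; the last left-to-right maximum is the index of the first occurrence of $\max_j a_j$. *)

theory Defs
  imports "HOL-Analysis.Analysis"
begin

definition word_prob :: "real \<Rightarrow> nat list \<Rightarrow> real" where
  "word_prob q w = (\<Prod>k\<leftarrow>w. (1 - q) * q ^ (k - 1))"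

definition words :: "nat \<Rightarrow> nat list set" where
  "words n = {w. length w = n \<and> (\<forall>x\<in>set w. 1 \<le> x)}"

definition left_of_last_ltr_max :: "nat list \<Rightarrow> nat" where
  "left_of_last_ltr_max w = (LEAST i. i < length w \<and> w ! i = Max (set w))"

definition F :: "real \<Rightarrow> nat \<Rightarrow> real" where
  "F q n = (\<Sum>\<^sub>\<infinity>w\<in>words n. word_prob q w * real (left_of_last_ltr_max w))"

end

theory Submission
  imports Defs
begin

text \<open>
  Split the words of length n according to their maximal letter m + 1. For these words, removing
  the first letter gives a recurrence in n: a first letter m + 1 is itself the first maximum,
  while a smaller first letter shifts the first maximum by one. With a = 1 - q^m and
  b = 1 - q^(m+1) the contribution of the maximum m + 1 to F_n is
  \<open>\<Sum>i\<le>n. a^i b^(n-i)\<close> - b^n - n a^n.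
  Expanding 1/(Q^k - 1) as the sum of q^((m+1)k) over m turns the claimed value into a series
  over m as well; its terms differ from these contributions by a telescoping correction whose
  sum vanishes.
\<close>

lemma alternating_binomial_sum:
  fixes u :: "'a :: comm_ring_1"
  shows "(\<Sum>k\<le>n. of_nat (n choose k) * (-1) ^ k * u ^ k) = (1 - u) ^ n"
proof -
  have "(-u + 1) ^ n = (\<Sum>k\<le>n. of_nat (n choose k) * (-u) ^ k * 1 ^ (n - k))"
    by (rule binomial_ring)
  then show ?thesis
    by (simp add: power_minus[of u] mult.assoc)
qed

lemma alternating_binomial_sum_weighted:
  fixes u :: "'a :: comm_ring_1"
  shows "(\<Sum>k\<le>n. of_nat (n choose k) * (-1) ^ k * of_nat k * u ^ k)
           = - of_nat n * u * (1 - u) ^ (n - 1)"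
proof (cases n)
  case (Suc m)
  have "(\<Sum>k\<le>n. of_nat (n choose k) * (-1) ^ k * of_nat k * u ^ k)
      = (\<Sum>k\<le>m. of_nat (Suc m choose Suc k) * (-1) ^ Suc k * of_nat (Suc k) * u ^ Suc k)"
    unfolding Suc by (subst sum.atMost_Suc_shift) simp
  also have "\<dots> = (\<Sum>k\<le>m. - of_nat (Suc m) * u * (of_nat (m choose k) * (-1) ^ k * u ^ k))"
  proof (rule sum.cong[OF refl])
    fix k
    have "of_nat (Suc m choose Suc k) * (-1) ^ Suc k * of_nat (Suc k) * u ^ Suc k
        = - u * ((-1) ^ k * u ^ k) * (of_nat (Suc k) * of_nat (Suc m choose Suc k))"
      by (simp add: algebra_simps del: binomial_Suc_Suc of_nat_Suc)
    also have "\<dots> = - u * ((-1) ^ k * u ^ k) * (of_nat (Suc m) * of_nat (m choose k))"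
      by (metis Suc_times_binomial of_nat_mult)
    finally show "of_nat (Suc m choose Suc k) * (-1) ^ Suc k * of_nat (Suc k) * u ^ Suc k
        = - of_nat (Suc m) * u * (of_nat (m choose k) * (-1) ^ k * u ^ k)"
      by (simp add: algebra_simps del: of_nat_Suc)
  qed
  also have "\<dots> = - of_nat (Suc m) * u * (1 - u) ^ m"
    by (simp add: sum_distrib_left[symmetric] alternating_binomial_sum)
  finally show ?thesis
    using Suc by simp
qed simp

text \<open>Since 1/(Q^k - 1) is the sum of (q^(j+1))^k over all j, the right-hand side of the theorem
  is the sum of \<open>binomial_kernel n (q^(j+1))\<close> over all j.\<close>

definition binomial_kernel :: "nat \<Rightarrow> real \<Rightarrow> real" where
  "binomial_kernel n u =
     (\<Sum>k=2..n. real (n choose k) * (-1) ^ k * (real (k - 1) * u ^ (k - 1) - real k * u ^ k))"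

lemma binomial_kernel_closed_form:
  "u * binomial_kernel n u = 1 - (1 - u) ^ n - real n * u * (1 - u) ^ n - real n * u\<^sup>2"
proof (cases "n = 0")
  case False
  define c where "c k = real (n choose k) * (-1) ^ k" for k
  have split: "(\<Sum>k\<le>n. f k) = f 0 + f 1 + (\<Sum>k=2..n. f k)" for f :: "nat \<Rightarrow> real"
  proof -
    have "{..n} = insert 0 (insert 1 {2..n})"
      using False by auto
    then show ?thesis
      by (simp add: add.assoc)
  qed
  have weighted: "(\<Sum>k=2..n. c k * real k * u ^ k) = - real n * u * (1 - u) ^ (n - 1) + real n * u"
    using alternating_binomial_sum_weighted[of n u] split[of "\<lambda>k. c k * real k * u ^ k"]
    by (simp add: c_def)
  have plain: "(\<Sum>k=2..n. c k * u ^ k) = (1 - u) ^ n - 1 + real n * u"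
    using alternating_binomial_sum[of n u] split[of "\<lambda>k. c k * u ^ k"]
    by (simp add: c_def)
  have "u * binomial_kernel n u = (\<Sum>k=2..n. c k * real k * u ^ k) - (\<Sum>k=2..n. c k * u ^ k)
      - u * (\<Sum>k=2..n. c k * real k * u ^ k)"
    unfolding binomial_kernel_def sum_distrib_left sum_subtractf[symmetric]
  proof (rule sum.cong[OF refl])
    fix k assume "k \<in> {2..n}"
    then obtain j where "k = Suc j" "1 \<le> j"
      by (cases k) auto
    then show "u * (real (n choose k) * (-1) ^ k * (real (k - 1) * u ^ (k - 1) - real k * u ^ k))
        = c k * real k * u ^ k - c k * u ^ k - u * (c k * real k * u ^ k)"
      by (simp add: c_def algebra_simps)
  qed
  also have "\<dots> = 1 - (1 - u) ^ n - real n * u * ((1 - u) * (1 - u) ^ (n - 1)) - real n * u\<^sup>2"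
    unfolding weighted plain by (simp add: algebra_simps power2_eq_square)
  finally show ?thesis
    using False by (cases n) simp_all
qed (simp add: binomial_kernel_def)

lemma sum_lists_length_Suc:
  "(\<Sum>w\<in>{w. set w \<subseteq> A \<and> length w = Suc n}. f w)
     = (\<Sum>x\<in>A. \<Sum>w\<in>{w. set w \<subseteq> A \<and> length w = n}. f (x # w))"
proof -
  define W where "W = {w. set w \<subseteq> A \<and> length w = n}"
  have "inj_on (\<lambda>(w, x). x # w) (W \<times> A)"
    by (auto simp: inj_on_def)
  then have "(\<Sum>w\<in>{w. set w \<subseteq> A \<and> length w = Suc n}. f w) = (\<Sum>(w, x)\<in>W \<times> A. f (x # w))"
    unfolding lists_length_Suc_eq W_def[symmetric] by (simp add: sum.reindex case_prod_unfold)
  also have "\<dots> = (\<Sum>w\<in>W. \<Sum>x\<in>A. f (x # w))"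
    by (rule sum.cartesian_product[symmetric])
  finally show ?thesis
    unfolding W_def by (simp add: sum.swap[of _ A])
qed

lemma sum_prod_list_lists_length:
  fixes f :: "'a \<Rightarrow> 'b :: comm_semiring_1"
  shows "(\<Sum>w\<in>{w. set w \<subseteq> A \<and> length w = n}. prod_list (map f w)) = (sum f A) ^ n"
proof (induction n)
  case 0
  have "{w. set w \<subseteq> A \<and> length w = 0} = {[]}"
    by auto
  then show ?case
    by simp
next
  case (Suc n)
  have "(\<Sum>w\<in>{w. set w \<subseteq> A \<and> length w = Suc n}. prod_list (map f w))
      = (\<Sum>x\<in>A. f x * (\<Sum>w\<in>{w. set w \<subseteq> A \<and> length w = n}. prod_list (map f w)))"
    unfolding sum_lists_length_Suc sum_distrib_left by simp
  then show ?case
    by (simp add: Suc.IH sum_distrib_right)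
qed

definition letter_prob :: "real \<Rightarrow> nat \<Rightarrow> real" where
  "letter_prob q k = (1 - q) * q ^ (k - 1)"

lemma word_prob_eq_prod_list: "word_prob q w = prod_list (map (letter_prob q) w)"
  by (simp add: word_prob_def letter_prob_def[abs_def])

lemma word_prob_Cons: "word_prob q (x # w) = letter_prob q x * word_prob q w"
  by (simp add: word_prob_eq_prod_list)

lemma word_prob_nonneg: "0 \<le> q \<Longrightarrow> q \<le> 1 \<Longrightarrow> 0 \<le> word_prob q w"
  unfolding word_prob_eq_prod_list letter_prob_def by (induction w) auto

lemma sum_letter_prob: "(\<Sum>k\<in>{1..m}. letter_prob q k) = 1 - q ^ m"
  by (induction m) (simp_all add: letter_prob_def algebra_simps)

definition words_upto :: "nat \<Rightarrow> nat \<Rightarrow> nat list set" where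
  "words_upto m n = {w. set w \<subseteq> {1..m} \<and> length w = n}"

definition words_with_max :: "nat \<Rightarrow> nat \<Rightarrow> nat list set" where
  "words_with_max m n = {w \<in> words_upto m n. m \<in> set w}"

lemma finite_words_upto [simp]: "finite (words_upto m n)"
  by (simp add: words_upto_def finite_lists_length_eq)

lemma finite_words_with_max [simp]: "finite (words_with_max m n)"
  by (simp add: words_with_max_def)

lemma sum_word_prob_words_upto: "(\<Sum>w\<in>words_upto m n. word_prob q w) = (1 - q ^ m) ^ n"
  unfolding words_upto_def word_prob_eq_prod_list sum_prod_list_lists_length sum_letter_prob ..

lemma words_upto_Suc_eq:
  "words_upto (Suc m) n = words_with_max (Suc m) n \<union> words_upto m n"
  by (auto simp: words_upto_def words_with_max_def le_Suc_eq)

lemma sum_word_prob_words_with_max: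
  "(\<Sum>w\<in>words_with_max (Suc m) n. word_prob q w) = (1 - q ^ Suc m) ^ n - (1 - q ^ m) ^ n"
proof -
  have "words_with_max (Suc m) n \<inter> words_upto m n = {}"
    by (auto simp: words_upto_def words_with_max_def)
  then show ?thesis
    using sum.union_disjoint[of "words_with_max (Suc m) n" "words_upto m n" "word_prob q"]
    by (simp add: words_upto_Suc_eq[symmetric] sum_word_prob_words_upto)
qed

lemma left_of_last_ltr_max_Cons:
  "left_of_last_ltr_max (x # w) = (if \<forall>y\<in>set w. y \<le> x then 0 else Suc (left_of_last_ltr_max w))"
proof (cases "\<forall>y\<in>set w. y \<le> x")
  case True
  then have "Max (set (x # w)) = x"
    by (intro Max_eqI) auto
  then show ?thesis
    using True unfolding left_of_last_ltr_max_def by (intro Least_equality) auto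
next
  case False
  then obtain y where y: "y \<in> set w" "x < y"
    by auto
  then have ne: "set w \<noteq> {}"
    by auto
  have less: "x < Max (set w)"
    using y(2) Max_ge[OF List.finite_set y(1)] by linarith
  then have "Max (set (x # w)) = Max (set w)"
    using ne by (simp add: Max_insert max_def)
  moreover obtain i where "i < length w" "w ! i = Max (set w)"
    using Max_in[OF List.finite_set ne] by (auto simp: in_set_conv_nth)
  ultimately show ?thesis
    using False less unfolding left_of_last_ltr_max_def by (subst Least_Suc[of _ "Suc i"]) auto
qed

definition F_with_max :: "real \<Rightarrow> nat \<Rightarrow> nat \<Rightarrow> real" where
  "F_with_max q n m = (\<Sum>w\<in>words_with_max m n. word_prob q w * real (left_of_last_ltr_max w))"

lemma words_with_max_Suc:
  "words_with_max (Suc m) (Suc n) = (\<lambda>(x, w). x # w) `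
     ({Suc m} \<times> words_upto (Suc m) n \<union> {1..m} \<times> words_with_max (Suc m) n)"
  (is "_ = ?image")
proof (intro set_eqI iffI)
  fix v assume "v \<in> words_with_max (Suc m) (Suc n)"
  then obtain x w where "v = x # w" "x \<in> {1..Suc m}" "w \<in> words_upto (Suc m) n" "Suc m \<in> set (x # w)"
    by (auto simp: words_with_max_def words_upto_def length_Suc_conv)
  then show "v \<in> ?image"
    by (cases "x = Suc m") (auto simp: words_with_max_def)
qed (fastforce simp: words_with_max_def words_upto_def)

lemma F_with_max_Suc:
  "F_with_max q (Suc n) (Suc m)
     = (1 - q ^ m) * (F_with_max q n (Suc m) + (1 - q ^ Suc m) ^ n - (1 - q ^ m) ^ n)"
proof -
  let ?g = "\<lambda>w. word_prob q w * real (left_of_last_ltr_max w)"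
  let ?U = "words_upto (Suc m) n" and ?W = "words_with_max (Suc m) n"
  have inj: "inj_on (\<lambda>(x, w). x # w) ({Suc m} \<times> ?U \<union> {1..m} \<times> ?W)"
    by (auto simp: inj_on_def)
  have disj: "({Suc m} \<times> ?U) \<inter> ({1..m} \<times> ?W) = {}"
    by auto
  have first_max: "?g (Suc m # w) = 0" if "w \<in> ?U" for w
    using that by (auto simp: words_upto_def left_of_last_ltr_max_Cons)
  have first_smaller:
    "?g (x # w) = letter_prob q x * (word_prob q w * (1 + real (left_of_last_ltr_max w)))"
    if "x \<in> {1..m}" "w \<in> ?W" for x w
    using that by (auto simp: words_with_max_def left_of_last_ltr_max_Cons word_prob_Cons)
  have "F_with_max q (Suc n) (Suc m) = (\<Sum>(x, w)\<in>{Suc m} \<times> ?U \<union> {1..m} \<times> ?W. ?g (x # w))"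
    unfolding F_with_max_def words_with_max_Suc sum.reindex[OF inj] by (simp add: case_prod_unfold)
  also have "\<dots> = (\<Sum>(x, w)\<in>{Suc m} \<times> ?U. ?g (x # w)) + (\<Sum>(x, w)\<in>{1..m} \<times> ?W. ?g (x # w))"
    by (rule sum.union_disjoint) (auto simp: disj)
  also have "\<dots> = (\<Sum>x\<in>{1..m}. \<Sum>w\<in>?W.
      letter_prob q x * (word_prob q w * (1 + real (left_of_last_ltr_max w))))"
    by (simp add: sum.cartesian_product[symmetric] first_max first_smaller)
  also have "\<dots> = (\<Sum>x\<in>{1..m}. letter_prob q x)
      * (\<Sum>w\<in>?W. word_prob q w * (1 + real (left_of_last_ltr_max w)))"
    by (rule sum_product[symmetric])
  also have "\<dots> = (1 - q ^ m) * (F_with_max q n (Suc m) + (\<Sum>w\<in>?W. word_prob q w))"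
    unfolding sum_letter_prob F_with_max_def by (simp add: distrib_left sum.distrib add.commute)
  finally show ?thesis
    by (simp add: sum_word_prob_words_with_max)
qed

lemma F_with_max_closed_form:
  "F_with_max q n (Suc m)
     = (\<Sum>i\<le>n. (1 - q ^ m) ^ i * (1 - q ^ Suc m) ^ (n - i))
       - (1 - q ^ Suc m) ^ n - real n * (1 - q ^ m) ^ n"
proof (induction n)
  case 0
  have "words_with_max (Suc m) 0 = {}"
    by (auto simp: words_with_max_def words_upto_def)
  then show ?case
    by (simp add: F_with_max_def)
next
  case (Suc n)
  define a where "a = 1 - q ^ m"
  define b where "b = 1 - q ^ Suc m"
  have shift: "(\<Sum>i\<le>Suc n. a ^ i * b ^ (Suc n - i)) = b ^ Suc n + a * (\<Sum>i\<le>n. a ^ i * b ^ (n - i))"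
    by (subst sum.atMost_Suc_shift) (simp add: sum_distrib_left mult.assoc)
  have "F_with_max q (Suc n) (Suc m) = a * (F_with_max q n (Suc m) + b ^ n - a ^ n)"
    unfolding F_with_max_Suc a_def b_def ..
  also have "\<dots> = a * (\<Sum>i\<le>n. a ^ i * b ^ (n - i)) - real (Suc n) * a ^ Suc n"
    unfolding Suc.IH a_def[symmetric] b_def[symmetric] by (simp add: algebra_simps)
  finally show ?case
    unfolding a_def[symmetric] b_def[symmetric] shift by simp
qed

lemma sums_power_Suc_power:
  fixes q :: real
  assumes "0 < q" "q < 1" "1 \<le> r"
  shows "(\<lambda>j. (q ^ Suc j) ^ r) sums (1 / ((1 / q) ^ r - 1))"
proof -
  have "q ^ r < 1" "0 < q ^ r"
    using assms by (simp_all add: power_less_one_iff)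
  then have "(\<lambda>j. q ^ r * (q ^ r) ^ j) sums (q ^ r * (1 / (1 - q ^ r)))"
    by (intro sums_mult geometric_sums) simp
  moreover have "q ^ r * (1 / (1 - q ^ r)) = 1 / ((1 / q) ^ r - 1)"
    using \<open>q ^ r < 1\<close> \<open>0 < q ^ r\<close> \<open>0 < q\<close> by (simp add: power_one_over field_simps)
  ultimately show ?thesis
    by (simp add: power_mult[symmetric] mult.commute power_mult_distrib)
qed

text \<open>Chosen so that its differences account for \<open>F_with_max - binomial_kernel\<close>; its limit
  (1 + n q)/(1 - q) equals its value at j = 0, so these differences sum to 0.\<close>

definition telescoping_term :: "real \<Rightarrow> nat \<Rightarrow> nat \<Rightarrow> real" where
  "telescoping_term q n j =
     - real n * (1 - q ^ j) ^ n + ((\<Sum>i\<le>n. (1 - q ^ j) ^ i) + real n * q ^ Suc j) / (1 - q)"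

lemma telescoping_term_tendsto:
  fixes q :: real
  assumes "0 < q" "q < 1"
  shows "telescoping_term q n \<longlonglongrightarrow> telescoping_term q n 0"
proof -
  let ?limit = "- real n * (1 - 0) ^ n + ((\<Sum>i\<le>n. (1 - 0) ^ i) + real n * (q * 0)) / (1 - q)"
  have "telescoping_term q n \<longlonglongrightarrow> ?limit"
    unfolding telescoping_term_def[abs_def] power_Suc
    by (intro tendsto_intros LIMSEQ_power_zero) (use assms in auto)
  moreover have "telescoping_term q n 0 = ?limit"
    using assms by (cases n) (simp_all add: telescoping_term_def sum.atMost_shift field_simps)
  ultimately show ?thesis
    by (simp only:)
qed

lemma F_with_max_eq_kernel_plus_telescoping:
  fixes q :: real
  assumes "0 < q" "q < 1"
  shows "F_with_max q n (Suc j)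
     = binomial_kernel n (q ^ Suc j) + (telescoping_term q n j - telescoping_term q n (Suc j))"
proof -
  define x where "x = q ^ j"
  define a where "a = 1 - x"
  define b where "b = 1 - q * x"
  define A where "A = a ^ n"
  define B where "B = b ^ n"
  have x: "x \<noteq> 0" "q \<noteq> 0" "1 - q \<noteq> 0"
    using assms by (simp_all add: x_def)
  have "(b - a) * (\<Sum>i\<le>n. a ^ i * b ^ (n - i)) = b * B - a * A"
    using diff_power_eq_sum[of a n b] by (simp add: A_def B_def lessThan_Suc_atMost algebra_simps)
  then have mixed: "(\<Sum>i\<le>n. a ^ i * b ^ (n - i)) = (b * B - a * A) / (x * (1 - q))"
    using x by (simp add: a_def b_def field_simps)
  have geo_a: "(\<Sum>i\<le>n. a ^ i) = (1 - a * A) / x"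
    using sum_gp_basic[of a n] x by (simp add: a_def A_def field_simps)
  have geo_b: "(\<Sum>i\<le>n. b ^ i) = (1 - b * B) / (q * x)"
    using sum_gp_basic[of b n] x by (simp add: b_def B_def field_simps)
  have kernel: "binomial_kernel n (q * x) = (1 - B - real n * (q * x) * B - real n * (q * x)\<^sup>2) / (q * x)"
    using binomial_kernel_closed_form[of "q * x" n] x by (simp add: b_def B_def field_simps)
  have tel_j: "telescoping_term q n j = - real n * A + ((1 - a * A) / x + real n * (q * x)) / (1 - q)"
    unfolding telescoping_term_def power_Suc x_def[symmetric] a_def[symmetric] A_def[symmetric] geo_a ..
  have tel_Suc: "telescoping_term q n (Suc j)
      = - real n * B + ((1 - b * B) / (q * x) + real n * (q * (q * x))) / (1 - q)"
    unfolding telescoping_term_def power_Suc x_def[symmetric] b_def[symmetric] B_def[symmetric] geo_b ..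
  have F_eq: "F_with_max q n (Suc j) = (b * B - a * A) / (x * (1 - q)) - B - real n * A"
    unfolding F_with_max_closed_form power_Suc x_def[symmetric] a_def[symmetric] b_def[symmetric]
      A_def[symmetric] B_def[symmetric] mixed ..
  show ?thesis
    unfolding F_eq tel_j tel_Suc power_Suc x_def[symmetric] kernel a_def b_def
    using x by (simp add: divide_simps) (simp add: algebra_simps power2_eq_square)
qed

lemma sums_F_with_max:
  fixes q :: real
  assumes q: "0 < q" "q < 1"
  shows "(\<lambda>j. F_with_max q n (Suc j)) sums (\<Sum>k=2..n. real (n choose k) * (-1) ^ k *
            (real (k - 1) / ((1 / q) ^ (k - 1) - 1) - real k / ((1 / q) ^ k - 1)))"
    (is "_ sums ?S")
proof -
  have kernel: "(\<lambda>j. binomial_kernel n (q ^ Suc j)) sums ?S"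
    unfolding binomial_kernel_def
  proof (rule sums_sum)
    fix k assume "k \<in> {2..n}"
    then have "1 \<le> k - 1" "1 \<le> k"
      by auto
    then have "(\<lambda>j. real (k - 1) * (q ^ Suc j) ^ (k - 1) - real k * (q ^ Suc j) ^ k)
        sums (real (k - 1) * (1 / ((1 / q) ^ (k - 1) - 1)) - real k * (1 / ((1 / q) ^ k - 1)))"
      by (intro sums_diff sums_mult sums_power_Suc_power[OF q])
    from sums_mult[OF this, of "real (n choose k) * (-1) ^ k"]
    show "(\<lambda>j. real (n choose k) * (-1) ^ k *
          (real (k - 1) * (q ^ Suc j) ^ (k - 1) - real k * (q ^ Suc j) ^ k))
        sums (real (n choose k) * (-1) ^ k *
          (real (k - 1) / ((1 / q) ^ (k - 1) - 1) - real k / ((1 / q) ^ k - 1)))"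
      by (simp add: mult.assoc)
  qed
  have "(\<lambda>j. telescoping_term q n j - telescoping_term q n (Suc j)) sums 0"
    using telescope_sums'[OF telescoping_term_tendsto[OF q]] by simp
  from sums_add[OF kernel this] show ?thesis
    by (simp add: F_with_max_eq_kernel_plus_telescoping[OF q])
qed

lemma has_sum_UnionI:
  fixes f :: "'a \<Rightarrow> 'b :: {linorder_topology, ordered_comm_monoid_add, topological_comm_monoid_add,
                            conditionally_complete_linorder, t3_space}"
  assumes f: "\<And>i. i \<in> I \<Longrightarrow> (f has_sum g i) (B i)"
    and g: "(g has_sum S) I"
    and nonneg: "\<And>i x. i \<in> I \<Longrightarrow> x \<in> B i \<Longrightarrow> 0 \<le> f x"
    and disj: "disjoint_family_on B I"
  shows "(f has_sum S) (\<Union>i\<in>I. B i)"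
proof -
  let ?T = "infsum f (\<Union>i\<in>I. B i)"
  have "f summable_on (\<Union>i\<in>I. B i)"
    using summable_on_UnionI[OF f _ nonneg disj] g by (auto dest: has_sum_imp_summable)
  moreover have "(\<Union>i\<in>I. B i) = snd ` Sigma I B"
    by force
  ultimately have "(f has_sum ?T) (snd ` Sigma I B)"
    using has_sum_infsum by fastforce
  moreover have "inj_on snd (Sigma I B)"
    using disj by (force simp: inj_on_def disjoint_family_on_def)
  ultimately have "((f \<circ> snd) has_sum ?T) (Sigma I B)"
    by (simp add: has_sum_reindex)
  then have "(g has_sum ?T) I"
    by (rule has_sum_SigmaD) (simp add: f)
  with g have "S = ?T"
    by (rule has_sum_unique)
  with \<open>f summable_on (\<Union>i\<in>I. B i)\<close> show ?thesis
    by (simp add: has_sum_infsum)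
qed

lemma F_with_max_nonneg: "0 \<le> q \<Longrightarrow> q \<le> 1 \<Longrightarrow> 0 \<le> F_with_max q n m"
  unfolding F_with_max_def by (intro sum_nonneg mult_nonneg_nonneg word_prob_nonneg) auto

lemma words_eq_UN_words_with_max: "0 < n \<Longrightarrow> words n = (\<Union>m. words_with_max (Suc m) n)"
proof (intro set_eqI iffI)
  fix w assume "0 < n" "w \<in> words n"
  then have w: "set w \<noteq> {}" "\<forall>x\<in>set w. 1 \<le> x" "length w = n"
    by (auto simp: words_def)
  define M where "M = Max (set w)"
  have "M \<in> set w" "set w \<subseteq> {1..M}"
    using w by (auto simp: M_def)
  moreover have "M = Suc (M - 1)"
    using w(2) \<open>M \<in> set w\<close> by fastforce
  ultimately have "w \<in> words_with_max (Suc (M - 1)) n"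
    using w(3) unfolding words_with_max_def words_upto_def by simp
  then show "w \<in> (\<Union>m. words_with_max (Suc m) n)"
    by blast
next
  fix w assume "w \<in> (\<Union>m. words_with_max (Suc m) n)"
  then show "w \<in> words n"
    by (force simp: words_def words_with_max_def words_upto_def)
qed

lemma disjoint_words_with_max: "disjoint_family (\<lambda>m. words_with_max m n)"
proof -
  have "m = m'" if "w \<in> words_with_max m n" "w \<in> words_with_max m' n" for w m m'
  proof -
    have "m \<in> {1..m'}" "m' \<in> {1..m}"
      using that unfolding words_with_max_def words_upto_def by blast+
    then show ?thesis
      by simp
  qed
  then show ?thesis
    unfolding disjoint_family_on_def by blast
qed

theorem mainTheorem5:
  fixes q :: real and n :: nat
  assumes "0 < q" and "q < 1" and "2 \<le> n"
  defines "Q \<equiv> 1 / q"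
  shows "F q n = (\<Sum>k=2..n. real (n choose k) * (-1) ^ k *
            (real (k - 1) / (Q ^ (k - 1) - 1) - real k / (Q ^ k - 1)))"
proof -
  let ?S = "\<Sum>k=2..n. real (n choose k) * (-1) ^ k *
            (real (k - 1) / ((1 / q) ^ (k - 1) - 1) - real k / ((1 / q) ^ k - 1))"
  let ?f = "\<lambda>w. word_prob q w * real (left_of_last_ltr_max w)"
  have "(?f has_sum ?S) (\<Union>m. words_with_max (Suc m) n)"
  proof (rule has_sum_UnionI)
    show "(?f has_sum F_with_max q n (Suc m)) (words_with_max (Suc m) n)" for m
      by (simp add: F_with_max_def)
    show "((\<lambda>m. F_with_max q n (Suc m)) has_sum ?S) UNIV"
      using assms by (intro sums_nonneg_imp_has_sum sums_F_with_max F_with_max_nonneg) auto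
    show "0 \<le> ?f w" for w
      using assms by (simp add: word_prob_nonneg)
    show "disjoint_family (\<lambda>m. words_with_max (Suc m) n)"
      using disjoint_words_with_max unfolding disjoint_family_on_def by simp
  qed
  then show ?thesis
    using assms unfolding F_def Q_def by (simp add: words_eq_UN_words_with_max infsumI)
qed

end
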